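(* If $G$ is a graph with minimum degree $\delta(G)\ge 2$ and $\beta_0(G)=\Gamma(G)$, then $\beta_0(G)=\Gamma(G)=\Gamma_{\rm cer}(G)$.
   Context: All graphs are finite and simple; $\delta(G)$ is the minimum degree and $\beta_0(G)$ is the maximum cardinality of an independent set of vertices of $G$. A set $D\subseteq V_G$ is a dominating set of $G$ if every vertex of $V_G-D$ has a neighbor in $D$; $\Gamma(G)$ is the maximum cardinality of a minimal (with respect to inclusion) dominating set. A set $D$ is a certified dominating set of $G$ if $D$ is dominating and every vertex of $D$ has either zero or at least two neighbors in $V_G-D$; $\Gamma_{\rm cer}(G)$ is the maximum cardinality of a minimal (with respect to inclusion) certified dominating set. *)

theory Defs
  imports Main
begin

definition simple_graph :: "'a set \<Rightarrow> ('a \<Rightarrow> 'a \<Rightarrow> bool) \<Rightarrow> bool" where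
  "simple_graph V E \<longleftrightarrow> finite V \<and> (\<forall>u v. E u v \<longrightarrow> E v u)
     \<and> (\<forall>v. \<not> E v v) \<and> (\<forall>u v. E u v \<longrightarrow> u \<in> V \<and> v \<in> V)"

definition nbhd :: "'a set \<Rightarrow> ('a \<Rightarrow> 'a \<Rightarrow> bool) \<Rightarrow> 'a \<Rightarrow> 'a set" where
  "nbhd V E v = {u \<in> V. E v u}"

definition degree :: "'a set \<Rightarrow> ('a \<Rightarrow> 'a \<Rightarrow> bool) \<Rightarrow> 'a \<Rightarrow> nat" where
  "degree V E v = card (nbhd V E v)"

definition min_degree :: "'a set \<Rightarrow> ('a \<Rightarrow> 'a \<Rightarrow> bool) \<Rightarrow> nat" where
  "min_degree V E = Min (degree V E ` V)"

definition independent :: "'a set \<Rightarrow> ('a \<Rightarrow> 'a \<Rightarrow> bool) \<Rightarrow> 'a set \<Rightarrow> bool" where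
  "independent V E S \<longleftrightarrow> S \<subseteq> V \<and> (\<forall>u\<in>S. \<forall>v\<in>S. \<not> E u v)"

definition indep_number :: "'a set \<Rightarrow> ('a \<Rightarrow> 'a \<Rightarrow> bool) \<Rightarrow> nat" where
  "indep_number V E = Max (card ` {S. independent V E S})"

definition dominating :: "'a set \<Rightarrow> ('a \<Rightarrow> 'a \<Rightarrow> bool) \<Rightarrow> 'a set \<Rightarrow> bool" where
  "dominating V E D \<longleftrightarrow> D \<subseteq> V \<and> (\<forall>v \<in> V - D. \<exists>u\<in>D. E v u)"

definition minimal_dominating :: "'a set \<Rightarrow> ('a \<Rightarrow> 'a \<Rightarrow> bool) \<Rightarrow> 'a set \<Rightarrow> bool" where
  "minimal_dominating V E D \<longleftrightarrow> dominating V E D \<and> (\<forall>D'. D' \<subset> D \<longrightarrow> \<not> dominating V E D')"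

definition upper_domination :: "'a set \<Rightarrow> ('a \<Rightarrow> 'a \<Rightarrow> bool) \<Rightarrow> nat" where
  "upper_domination V E = Max (card ` {D. minimal_dominating V E D})"

definition certified_dominating :: "'a set \<Rightarrow> ('a \<Rightarrow> 'a \<Rightarrow> bool) \<Rightarrow> 'a set \<Rightarrow> bool" where
  "certified_dominating V E D \<longleftrightarrow> dominating V E D \<and>
     (\<forall>v\<in>D. card (nbhd V E v \<inter> (V - D)) = 0 \<or> card (nbhd V E v \<inter> (V - D)) \<ge> 2)"

definition minimal_certified_dominating :: "'a set \<Rightarrow> ('a \<Rightarrow> 'a \<Rightarrow> bool) \<Rightarrow> 'a set \<Rightarrow> bool" where
  "minimal_certified_dominating V E D \<longleftrightarrow> certified_dominating V E D \<and>
     (\<forall>D'. D' \<subset> D \<longrightarrow> \<not> certified_dominating V E D')"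

definition upper_certified_domination :: "'a set \<Rightarrow> ('a \<Rightarrow> 'a \<Rightarrow> bool) \<Rightarrow> nat" where
  "upper_certified_domination V E = Max (card ` {D. minimal_certified_dominating V E D})"

end

theory Submission
  imports Defs
begin

text \<open>
  When no vertex has degree 1, a maximum independent set I is a minimal certified dominating
  set: it dominates by maximality, all neighbours of a vertex of I lie outside I, and a proper
  subset of I cannot dominate the vertices of I it omits. Hence \<open>\<beta>\<^sub>0 \<le> \<Gamma>\<^sub>c\<^sub>e\<^sub>r\<close>.

  Conversely, every minimal certified dominating set D is a minimal dominating set. Otherwise
  D - {v} dominates for some v \<in> D. Let R be the vertices of D - {v} with at least two
  neighbours outside D; by certification they dominate V - D. Add to R a maximal independent
  set J of those vertices of D - R that have no neighbour in R. Then R \<union> J is certified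
  dominating (a vertex of J has all its neighbours outside R \<union> J), and it misses a vertex
  of D, because v and its neighbour in D - {v} cannot both lie in J. Hence
  \<open>\<Gamma>\<^sub>c\<^sub>e\<^sub>r \<le> \<Gamma>\<close>, and the hypothesis \<open>\<beta>\<^sub>0 = \<Gamma>\<close> closes the chain.
\<close>

lemma card_le_Max_card_image:
  assumes "finite V" "\<S> \<subseteq> Pow V" "S \<in> \<S>"
  shows "card S \<le> Max (card ` \<S>)"
  using assms by (simp add: finite_subset[OF assms(2)])

lemma ex_card_eq_Max_card_image:
  assumes "finite V" "\<S> \<subseteq> Pow V" "\<S> \<noteq> {}"
  obtains S where "S \<in> \<S>" "card S = Max (card ` \<S>)"
proof -
  have "Max (card ` \<S>) \<in> card ` \<S>"
    using assms by (simp add: finite_subset[OF assms(2)])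
  then show ?thesis
    using that by (metis imageE)
qed

lemma degree_ge_min_degree:
  assumes "finite V" "x \<in> V"
  shows "min_degree V E \<le> degree V E x"
  unfolding min_degree_def using assms by (intro Min_le) auto

lemma dominating_mono:
  assumes "dominating V E A" "A \<subseteq> B" "B \<subseteq> V"
  shows "dominating V E B"
  using assms unfolding dominating_def by blast

lemma independent_empty: "independent V E {}"
  by (simp add: independent_def)

lemma independent_sets_subset_Pow: "{S. independent V E S} \<subseteq> Pow V"
  unfolding independent_def by blast

lemma independent_insert:
  assumes "simple_graph V E" "independent V E I" "x \<in> V" "\<forall>u\<in>I. \<not> E x u"
  shows "independent V E (insert x I)"
  using assms unfolding simple_graph_def independent_def by auto

lemma ex_maximal_independent_subset:
  assumes "simple_graph V E" "U \<subseteq> V"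
  obtains I where "I \<subseteq> U" "independent V E I" "\<forall>u\<in>U - I. \<exists>i\<in>I. E u i"
proof -
  let ?F = "{I. I \<subseteq> U \<and> independent V E I}"
  have "finite U"
    using assms finite_subset unfolding simple_graph_def by blast
  moreover have "?F \<subseteq> Pow U"
    by blast
  ultimately have "finite ?F"
    using finite_subset by blast
  moreover have "?F \<noteq> {}"
    using independent_empty by blast
  ultimately obtain I where "I \<in> ?F" and max: "\<forall>J\<in>?F. I \<le> J \<longrightarrow> I = J"
    by (metis finite_has_maximal)
  then have I: "I \<subseteq> U" "independent V E I"
    by blast+
  have "\<exists>i\<in>I. E u i" if u: "u \<in> U - I" for u
  proof (rule ccontr)
    assume "\<not> ?thesis"
    then have "independent V E (insert u I)"
      using u assms(2) by (intro independent_insert[OF assms(1) I(2)]) auto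
    then have "insert u I \<in> ?F"
      using I(1) u by blast
    then show False
      using max u by blast
  qed
  with I that show ?thesis
    by blast
qed

lemma maximum_independent_dominating:
  assumes "simple_graph V E" "independent V E I" "card I = indep_number V E"
  shows "dominating V E I"
  unfolding dominating_def
proof (intro conjI ballI)
  have finV: "finite V"
    using assms(1) unfolding simple_graph_def by blast
  show IV: "I \<subseteq> V"
    using assms(2) unfolding independent_def by blast
  fix x assume x: "x \<in> V - I"
  show "\<exists>u\<in>I. E x u"
  proof (rule ccontr)
    assume "\<not> ?thesis"
    then have "independent V E (insert x I)"
      using x by (intro independent_insert[OF assms(1,2)]) auto
    then have "card (insert x I) \<le> indep_number V E"
      unfolding indep_number_def
      by (intro card_le_Max_card_image[OF finV independent_sets_subset_Pow]) simp
    moreover have "finite I"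
      using IV finV by (rule finite_subset)
    ultimately show False
      using assms(3) x by simp
  qed
qed

lemma independent_dominating_imp_minimal_certified_dominating:
  assumes "independent V E I" "dominating V E I" "\<forall>x\<in>I. degree V E x \<noteq> 1"
  shows "minimal_certified_dominating V E I"
  unfolding minimal_certified_dominating_def
proof (intro conjI allI impI notI)
  show "certified_dominating V E I"
    unfolding certified_dominating_def
  proof (intro conjI ballI assms(2))
    fix y assume "y \<in> I"
    then have "nbhd V E y \<inter> (V - I) = nbhd V E y"
      using assms(1) unfolding nbhd_def independent_def by blast
    then show "card (nbhd V E y \<inter> (V - I)) = 0 \<or> 2 \<le> card (nbhd V E y \<inter> (V - I))"
      using assms(3) \<open>y \<in> I\<close> unfolding degree_def by fastforce
  qed
next
  fix D assume D: "D \<subset> I" "certified_dominating V E D"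
  then obtain x where "x \<in> I" "x \<notin> D"
    by blast
  then obtain u where "u \<in> D" "E x u"
    using D assms(1) unfolding certified_dominating_def dominating_def independent_def by blast
  then show False
    using D(1) \<open>x \<in> I\<close> assms(1) unfolding independent_def by blast
qed

lemma certified_outside_dominator:
  assumes "simple_graph V E" "certified_dominating V E D" "dominating V E (D - {v})"
    and "x \<in> V - D"
  obtains y where "y \<in> D - {v}" "E x y" "2 \<le> card (nbhd V E y \<inter> (V - D))"
proof -
  obtain y where y: "y \<in> D - {v}" "E x y"
    using assms(3,4) unfolding dominating_def by blast
  have "x \<in> nbhd V E y \<inter> (V - D)"
    using assms(1,4) y(2) unfolding simple_graph_def nbhd_def by blast
  moreover have "finite (nbhd V E y \<inter> (V - D))"
    using assms(1) unfolding simple_graph_def nbhd_def by simp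
  ultimately have "card (nbhd V E y \<inter> (V - D)) \<noteq> 0"
    by auto
  then have "2 \<le> card (nbhd V E y \<inter> (V - D))"
    using assms(2) y(1) unfolding certified_dominating_def by auto
  with y that show ?thesis
    by blast
qed

lemma certified_dominating_shrink:
  assumes G: "simple_graph V E" and deg: "\<forall>x\<in>V. degree V E x \<noteq> 1"
    and cert: "certified_dominating V E D" and v: "v \<in> D" "dominating V E (D - {v})"
  obtains T where "T \<subset> D" "certified_dominating V E T"
proof -
  have DV: "D \<subseteq> V"
    using cert unfolding certified_dominating_def dominating_def by blast
  have finV: "finite V"
    using G unfolding simple_graph_def by blast
  define R where "R = {y \<in> D - {v}. 2 \<le> card (nbhd V E y \<inter> (V - D))}"
  define U where "U = {x \<in> D - R. \<forall>y\<in>R. \<not> E x y}"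
  obtain I where I: "I \<subseteq> U" "independent V E I" "\<forall>u\<in>U - I. \<exists>i\<in>I. E u i"
    using ex_maximal_independent_subset[OF G, of U] DV unfolding U_def by blast
  define T where "T = R \<union> I"
  have TD: "T \<subseteq> D"
    using I(1) unfolding T_def R_def U_def by blast
  have outside: "\<exists>y\<in>R. E x y" if "x \<in> V - D" for x
    using certified_outside_dominator[OF G cert v(2) that] unfolding R_def by blast
  have "dominating V E T"
    unfolding dominating_def
  proof (intro conjI ballI)
    show "T \<subseteq> V"
      using TD DV by blast
    fix x assume x: "x \<in> V - T"
    show "\<exists>u\<in>T. E x u"
    proof (cases "x \<in> D")
      case False
      then show ?thesis
        using outside x unfolding T_def by blast
    next
      case True
      show ?thesis
      proof (cases "x \<in> U")
        case True
        then show ?thesis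
          using I(3) x unfolding T_def by blast
      next
        case False
        then show ?thesis
          using \<open>x \<in> D\<close> x unfolding U_def T_def by blast
      qed
    qed
  qed
  moreover have "card (nbhd V E y \<inter> (V - T)) = 0 \<or> 2 \<le> card (nbhd V E y \<inter> (V - T))"
    if y: "y \<in> T" for y
  proof (cases "y \<in> R")
    case True
    have "nbhd V E y \<inter> (V - D) \<subseteq> nbhd V E y \<inter> (V - T)"
      using TD by blast
    then have "card (nbhd V E y \<inter> (V - D)) \<le> card (nbhd V E y \<inter> (V - T))"
      using finV by (intro card_mono) (auto simp: nbhd_def)
    with True show ?thesis
      unfolding R_def by simp
  next
    case False
    then have "y \<in> I"
      using y unfolding T_def by blast
    then have "nbhd V E y \<inter> (V - T) = nbhd V E y" and "y \<in> V"
      using I(1,2) DV unfolding nbhd_def T_def U_def independent_def by auto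
    then show ?thesis
      using deg unfolding degree_def by fastforce
  qed
  ultimately have "certified_dominating V E T"
    unfolding certified_dominating_def by blast
  moreover have "T \<noteq> D"
  proof
    assume "T = D"
    have "v \<in> I"
      using v(1) \<open>T = D\<close> unfolding T_def R_def by blast
    moreover obtain w where w: "w \<in> D - {v}" "E v w"
      using v DV unfolding dominating_def by blast
    moreover have "w \<notin> R"
      using \<open>v \<in> I\<close> I(1) w(2) unfolding U_def by blast
    ultimately show False
      using \<open>T = D\<close> I(2) unfolding T_def independent_def by blast
  qed
  ultimately show ?thesis
    using that TD by blast
qed

lemma minimal_certified_imp_minimal_dominating:
  assumes "simple_graph V E" "\<forall>x\<in>V. degree V E x \<noteq> 1"
    and D: "minimal_certified_dominating V E D"
  shows "minimal_dominating V E D"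
proof (rule ccontr)
  have cert: "certified_dominating V E D"
    using D unfolding minimal_certified_dominating_def by blast
  then have dom: "dominating V E D"
    unfolding certified_dominating_def by blast
  then have DV: "D \<subseteq> V"
    unfolding dominating_def by blast
  assume "\<not> minimal_dominating V E D"
  with dom obtain D' where D': "D' \<subset> D" "dominating V E D'"
    unfolding minimal_dominating_def by blast
  then obtain v where v: "v \<in> D" "v \<notin> D'"
    by blast
  have "dominating V E (D - {v})"
    using D' v DV by (intro dominating_mono[OF D'(2)]) auto
  then obtain T where "T \<subset> D" "certified_dominating V E T"
    using certified_dominating_shrink[OF assms(1,2) cert v(1)] by blast
  with D show False
    unfolding minimal_certified_dominating_def by blast
qed

lemma ex_maximum_independent_set:
  assumes "finite V"
  obtains I where "independent V E I" "card I = indep_number V E"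
  unfolding indep_number_def
  by (rule ex_card_eq_Max_card_image[OF assms independent_sets_subset_Pow])
    (use independent_empty in blast)+

lemma maximum_independent_imp_minimal_certified_dominating:
  assumes G: "simple_graph V E" and deg: "\<forall>x\<in>V. degree V E x \<noteq> 1"
    and I: "independent V E I" "card I = indep_number V E"
  shows "minimal_certified_dominating V E I"
proof (rule independent_dominating_imp_minimal_certified_dominating[OF I(1)])
  show "dominating V E I"
    using maximum_independent_dominating[OF G I] .
  show "\<forall>x\<in>I. degree V E x \<noteq> 1"
    using deg I(1) unfolding independent_def by blast
qed

lemma minimal_dominating_sets_subset_Pow: "{D. minimal_dominating V E D} \<subseteq> Pow V"
  unfolding minimal_dominating_def dominating_def by blast

lemma minimal_certified_dominating_sets_subset_Pow:
  "{D. minimal_certified_dominating V E D} \<subseteq> Pow V"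
  unfolding minimal_certified_dominating_def certified_dominating_def dominating_def by blast

lemma upper_certified_domination_le_upper_domination:
  assumes G: "simple_graph V E" and deg: "\<forall>x\<in>V. degree V E x \<noteq> 1"
    and ne: "minimal_certified_dominating V E D\<^sub>0"
  shows "upper_certified_domination V E \<le> upper_domination V E"
proof -
  have finV: "finite V"
    using G unfolding simple_graph_def by blast
  obtain D where D: "minimal_certified_dominating V E D"
      "card D = upper_certified_domination V E"
    unfolding upper_certified_domination_def
    by (rule ex_card_eq_Max_card_image[OF finV minimal_certified_dominating_sets_subset_Pow])
      (use ne in blast)+
  then show ?thesis
    unfolding upper_domination_def D(2)[symmetric]
    using minimal_certified_imp_minimal_dominating[OF G deg D(1)]
    by (intro card_le_Max_card_image[OF finV minimal_dominating_sets_subset_Pow]) simp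
qed

theorem corollary3p6:
  fixes V :: "'a set" and E :: "'a \<Rightarrow> 'a \<Rightarrow> bool"
  assumes "simple_graph V E"
    and "V \<noteq> {}"
    and "min_degree V E \<ge> 2"
    and "indep_number V E = upper_domination V E"
  shows "indep_number V E = upper_domination V E
       \<and> upper_domination V E = upper_certified_domination V E"
proof -
  have finV: "finite V"
    using assms(1) unfolding simple_graph_def by blast
  have deg: "\<forall>x\<in>V. degree V E x \<noteq> 1"
  proof
    fix x assume "x \<in> V"
    then have "min_degree V E \<le> degree V E x"
      by (rule degree_ge_min_degree[OF finV])
    with assms(3) show "degree V E x \<noteq> 1"
      by linarith
  qed
  obtain I where I: "independent V E I" "card I = indep_number V E"
    using ex_maximum_independent_set[OF finV] by blast
  have mcd: "minimal_certified_dominating V E I"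
    using maximum_independent_imp_minimal_certified_dominating[OF assms(1) deg I] .
  then have "indep_number V E \<le> upper_certified_domination V E"
    unfolding upper_certified_domination_def I(2)[symmetric]
    by (intro card_le_Max_card_image[OF finV minimal_certified_dominating_sets_subset_Pow]) simp
  moreover have "upper_certified_domination V E \<le> upper_domination V E"
    using upper_certified_domination_le_upper_domination[OF assms(1) deg mcd] .
  ultimately show ?thesis
    using assms(4) by simp
qed

end
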